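(* Let $G$ be a digraph and $r\ge1$. Then the distance-$r$ VC-dimension of $G$ is at most $(r+2)\cdot(2\,\mathrm{wcol}_r(G))^2$.
   Context: For a linear order $L$ of $V(G)$, $u$ is weakly $r$-reachable from $v$ if there is a directed path of length at most $r$ from $u$ to $v$ or from $v$ to $u$ on which $u$ is the $L$-minimum; $\mathrm{WReach}_r[G,L,v]$ is the set of such $u$; $\mathrm{wcol}_r(G)=\min_L\max_{v}|\mathrm{WReach}_r[G,L,v]|$. $N_r^-(v)$ is the set of vertices from which $v$ is reachable by a directed path of length at most $r$. The distance-$r$ VC-dimension of $G$ is the VC-dimension of the set family $\{N_r^-(v) : v\in V(G)\}$ over ground set $V(G)$, i.e. the maximum size of a set $X\subseteq V(G)$ with $\{X\cap N_r^-(v): v\in V(G)\}=2^X$. *)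

theory Defs
  imports Main
begin

text \<open>A directed path is a nonempty list of pairwise distinct vertices, consecutive ones joined by arcs;
  its length is the number of arcs.\<close>

definition dipath :: "'a set \<Rightarrow> ('a \<times> 'a) set \<Rightarrow> 'a list \<Rightarrow> bool" where
  "dipath V E xs \<longleftrightarrow> xs \<noteq> [] \<and> distinct xs \<and> set xs \<subseteq> V \<and>
     (\<forall>i. Suc i < length xs \<longrightarrow> (xs ! i, xs ! Suc i) \<in> E)"

definition dipath_le :: "'a set \<Rightarrow> ('a \<times> 'a) set \<Rightarrow> nat \<Rightarrow> 'a \<Rightarrow> 'a \<Rightarrow> 'a list \<Rightarrow> bool" where
  "dipath_le V E r u v xs \<longleftrightarrow> dipath V E xs \<and> length xs \<le> Suc r \<and> hd xs = u \<and> last xs = v"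

definition WReach :: "'a set \<Rightarrow> ('a \<times> 'a) set \<Rightarrow> nat \<Rightarrow> ('a \<times> 'a) set \<Rightarrow> 'a \<Rightarrow> 'a set" where
  "WReach V E r L v = {u \<in> V. \<exists>xs. (dipath_le V E r u v xs \<or> dipath_le V E r v u xs) \<and>
                                  (\<forall>w \<in> set xs. (u, w) \<in> L)}"

definition wcol :: "'a set \<Rightarrow> ('a \<times> 'a) set \<Rightarrow> nat \<Rightarrow> nat" where
  "wcol V E r = Min ((\<lambda>L. Max (insert 0 ((\<lambda>v. card (WReach V E r L v)) ` V)))
                        ` {L. linear_order_on V L})"

definition in_nbhd :: "'a set \<Rightarrow> ('a \<times> 'a) set \<Rightarrow> nat \<Rightarrow> 'a \<Rightarrow> 'a set" where
  "in_nbhd V E r v = {u \<in> V. \<exists>xs. dipath_le V E r u v xs}"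

definition shattered_by :: "'a set \<Rightarrow> 'a set set \<Rightarrow> bool" where
  "shattered_by X F \<longleftrightarrow> (\<lambda>S. X \<inter> S) ` F = Pow X"

definition vc_dim :: "'a set \<Rightarrow> 'a set set \<Rightarrow> nat" where
  "vc_dim U F = Max (insert 0 {card X | X. X \<subseteq> U \<and> shattered_by X F})"

definition dist_vc_dim :: "'a set \<Rightarrow> ('a \<times> 'a) set \<Rightarrow> nat \<Rightarrow> nat" where
  "dist_vc_dim V E r = vc_dim V (in_nbhd V E r ` V)"

end

theory Submission
  imports Defs
begin

text \<open>Fix a linear order L attaining \<open>c = wcol\<^sub>r(G)\<close> and a shattered set X with \<open>|X| = d\<close>.
  On every path of length at most r from x to v, the L-least vertex m is weakly r-reachable
  from both x and v. Hence the trace \<open>X \<inter> N\<^sub>r\<^sup>-(v)\<close> is determined by the at most c pairs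
  \<open>(m, dist(m, v))\<close> with \<open>m \<in> WReach\<^sub>r[v]\<close> lying in \<open>S = \<Union>\<^sub>x\<^sub>\<in>\<^sub>X WReach\<^sub>r[x]\<close>, a set of size at
  most cd. Counting the possible codes gives \<open>2\<^sup>d \<le> (c d (r + 1) + 1)\<^sup>c\<close>, which forces
  \<open>d \<le> (r + 2) (2c)\<^sup>2\<close>.\<close>

subsection \<open>Walks and paths\<close>

text \<open>Walks compose while paths do not; the two reachability notions agree
  (\<open>reach_within_iff_dipath_le\<close>) by shortcutting repeated vertices.\<close>

definition reach_within :: "'a set \<Rightarrow> ('a \<times> 'a) set \<Rightarrow> nat \<Rightarrow> 'a \<Rightarrow> 'a \<Rightarrow> bool" where
  "reach_within V E k x y \<longleftrightarrow> x \<in> V \<and> (\<exists>j\<le>k. (x, y) \<in> E ^^ j)"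

lemma reach_within_mono: "reach_within V E a x y \<Longrightarrow> a \<le> b \<Longrightarrow> reach_within V E b x y"
  unfolding reach_within_def by (meson le_trans)

lemma reach_within_trans:
  assumes "reach_within V E a x y" and "reach_within V E b y z"
  shows "reach_within V E (a + b) x z"
proof -
  obtain i j where "x \<in> V" "i \<le> a" "(x, y) \<in> E ^^ i" "j \<le> b" "(y, z) \<in> E ^^ j"
    using assms unfolding reach_within_def by blast
  then show ?thesis
    unfolding reach_within_def by (intro conjI exI[of _ "i + j"]) (auto simp: relpow_add)
qed

lemma dipath_take: "dipath V E xs \<Longrightarrow> k < length xs \<Longrightarrow> dipath V E (take (Suc k) xs)"
  unfolding dipath_def by (auto simp: nth_take dest: in_set_takeD)

lemma dipath_drop: "dipath V E xs \<Longrightarrow> k < length xs \<Longrightarrow> dipath V E (drop k xs)"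
  unfolding dipath_def by (auto simp: nth_drop dest: in_set_dropD)

lemma dipath_snoc:
  assumes "dipath V E xs" and "(last xs, y) \<in> E" and "y \<in> V" and "y \<notin> set xs"
  shows "dipath V E (xs @ [y])"
  unfolding dipath_def
proof (intro conjI allI impI)
  fix i assume "Suc i < length (xs @ [y])"
  then have "Suc i < length xs \<or> i = length xs - 1" by auto
  then show "((xs @ [y]) ! i, (xs @ [y]) ! Suc i) \<in> E"
    using assms by (auto simp: dipath_def nth_append last_conv_nth)
qed (use assms in \<open>auto simp: dipath_def\<close>)

lemma dipath_relpow: "dipath V E xs \<Longrightarrow> (hd xs, last xs) \<in> E ^^ (length xs - 1)"
proof (induction xs rule: induct_list012)
  case (3 a b xs)
  then have "dipath V E (b # xs)" and "(a, b) \<in> E"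
    unfolding dipath_def by (auto simp: nth_Cons' split: if_splits)
  with "3.IH" show ?case using relpow_Suc_I2[where n = "length xs"] by auto
qed (auto simp: dipath_def)

lemma relpow_imp_dipath:
  assumes "E \<subseteq> V \<times> V" and "(a, b) \<in> E ^^ j" and "a \<in> V"
  shows "\<exists>xs. dipath V E xs \<and> hd xs = a \<and> last xs = b \<and> length xs \<le> Suc j"
  using assms(2)
proof (induction j arbitrary: b)
  case 0
  then show ?case using \<open>a \<in> V\<close> by (intro exI[of _ "[a]"]) (auto simp: dipath_def)
next
  case (Suc j)
  then obtain c where "(a, c) \<in> E ^^ j" and cb: "(c, b) \<in> E" by auto
  with Suc.IH obtain xs where xs: "dipath V E xs" "hd xs = a" "last xs = c" "length xs \<le> Suc j"
    by blast
  show ?case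
  proof (cases "b \<in> set xs")
    case True
    then obtain k where k: "k < length xs" "xs ! k = b" by (auto simp: in_set_conv_nth)
    moreover have "hd (take (Suc k) xs) = a" using xs(2) k(1) by (cases xs) auto
    moreover have "last (take (Suc k) xs) = b" using k by (simp add: take_Suc_conv_app_nth)
    ultimately show ?thesis
      using xs dipath_take[OF xs(1) k(1)] by (intro exI[of _ "take (Suc k) xs"]) auto
  next
    case False
    with xs cb assms(1) have "dipath V E (xs @ [b])" by (auto intro: dipath_snoc)
    with xs show ?thesis by (intro exI[of _ "xs @ [b]"]) (auto simp: dipath_def)
  qed
qed

lemma reach_within_iff_dipath_le:
  assumes "E \<subseteq> V \<times> V"
  shows "reach_within V E k x y \<longleftrightarrow> (\<exists>xs. dipath_le V E k x y xs)"
proof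
  assume "reach_within V E k x y"
  then obtain j where "x \<in> V" "j \<le> k" "(x, y) \<in> E ^^ j" by (auto simp: reach_within_def)
  with relpow_imp_dipath[OF assms] show "\<exists>xs. dipath_le V E k x y xs"
    unfolding dipath_le_def by (meson le_trans not_less_eq_eq)
next
  assume "\<exists>xs. dipath_le V E k x y xs"
  then obtain xs where xs: "dipath_le V E k x y xs" by blast
  then have "(x, y) \<in> E ^^ (length xs - 1)"
    using dipath_relpow unfolding dipath_le_def by metis
  moreover have "x \<in> V"
    using xs unfolding dipath_le_def dipath_def by (metis hd_in_set subsetD)
  ultimately show "reach_within V E k x y" using xs
    unfolding reach_within_def dipath_le_def by (intro conjI exI[of _ "length xs - 1"]) auto
qed

subsection \<open>Weak reachability\<close>

lemma linear_order_on_least: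
  assumes "linear_order_on V L" and "finite A" "A \<noteq> {}" "A \<subseteq> V"
  shows "\<exists>m\<in>A. \<forall>w\<in>A. (m, w) \<in> L"
  using assms(2-4)
proof (induction A rule: finite_ne_induct)
  case (singleton x)
  then show ?case using assms(1) by (auto simp: order_on_defs refl_on_def)
next
  case (insert x F)
  then obtain m where m: "m \<in> F" "\<forall>w\<in>F. (m, w) \<in> L" by auto
  have "trans L" "total_on V L" "refl_on V L"
    using assms(1) by (auto simp: order_on_defs)
  moreover have "x \<in> V" "m \<in> V" using insert m by auto
  ultimately consider "(x, m) \<in> L" | "(m, x) \<in> L"
    by (metis refl_onD total_on_def)
  then show ?case
  proof cases
    case 1
    with m \<open>trans L\<close> \<open>refl_on V L\<close> \<open>x \<in> V\<close> show ?thesis by (auto dest: transD refl_onD)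
  qed (use m in auto)
qed

text \<open>The L-least vertex on a path from x to v splits it into two pieces witnessing weak
  reachability from x and from v.\<close>

lemma in_nbhd_through_WReach:
  assumes "E \<subseteq> V \<times> V" and "linear_order_on V L" and "x \<in> in_nbhd V E r v"
  shows "\<exists>m a b. m \<in> WReach V E r L v \<and> m \<in> WReach V E r L x \<and> a + b \<le> r
           \<and> reach_within V E a x m \<and> reach_within V E b m v"
proof -
  from assms(3) obtain xs where xs: "dipath_le V E r x v xs" by (auto simp: in_nbhd_def)
  then have dp: "dipath V E xs" and len: "length xs \<le> Suc r" and "hd xs = x" "last xs = v"
    and "xs \<noteq> []" "set xs \<subseteq> V"
    by (auto simp: dipath_le_def dipath_def)
  obtain m where m: "m \<in> set xs" "\<forall>w\<in>set xs. (m, w) \<in> L"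
    using linear_order_on_least[OF assms(2), of "set xs"] \<open>xs \<noteq> []\<close> \<open>set xs \<subseteq> V\<close> by auto
  obtain k where k: "k < length xs" "xs ! k = m" using m(1) by (auto simp: in_set_conv_nth)
  define ys where "ys = drop k xs"
  define zs where "zs = take (Suc k) xs"
  have ys: "dipath_le V E (length xs - Suc k) m v ys"
    unfolding dipath_le_def ys_def using dipath_drop[OF dp k(1)] k \<open>last xs = v\<close>
    by (auto simp: hd_drop_conv_nth)
  have "hd zs = x" unfolding zs_def using \<open>hd xs = x\<close> \<open>xs \<noteq> []\<close> by (cases xs) auto
  moreover have "last zs = m" unfolding zs_def using k by (simp add: take_Suc_conv_app_nth)
  ultimately have zs: "dipath_le V E k x m zs"
    unfolding dipath_le_def zs_def using dipath_take[OF dp k(1)] k by auto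
  have "m \<in> V" using m \<open>set xs \<subseteq> V\<close> by auto
  moreover have "\<forall>w\<in>set ys. (m, w) \<in> L" "\<forall>w\<in>set zs. (m, w) \<in> L"
    using m unfolding ys_def zs_def by (auto dest: in_set_dropD in_set_takeD)
  moreover have "dipath_le V E r m v ys" "dipath_le V E r x m zs"
    using ys zs len k unfolding dipath_le_def by auto
  ultimately have "m \<in> WReach V E r L v" "m \<in> WReach V E r L x"
    unfolding WReach_def by blast+
  moreover have "k + (length xs - Suc k) \<le> r" using k len by auto
  ultimately show ?thesis
    using ys zs reach_within_iff_dipath_le[OF assms(1)] by blast
qed

lemma exists_linear_order_wcol:
  assumes "finite V"
  shows "\<exists>L. linear_order_on V L \<and> (\<forall>v\<in>V. card (WReach V E r L v) \<le> wcol V E r)"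
proof -
  define F where "F = {L. linear_order_on V L}"
  define h where "h = (\<lambda>L. Max (insert 0 ((\<lambda>v. card (WReach V E r L v)) ` V)))"
  have "F \<subseteq> Pow (V \<times> V)" unfolding F_def by (auto simp: order_on_defs refl_on_def)
  then have "finite F" using assms by (meson finite_Pow_iff finite_SigmaI finite_subset)
  moreover have "F \<noteq> {}"
    using well_order_on[of V] unfolding F_def well_order_on_def by blast
  ultimately have "Min (h ` F) \<in> h ` F" by (intro Min_in) auto
  then obtain L where "L \<in> F" "h L = Min (h ` F)" by auto
  moreover have "\<forall>v\<in>V. card (WReach V E r L v) \<le> h L"
    unfolding h_def using assms by auto
  ultimately show ?thesis unfolding wcol_def F_def h_def by auto
qed

subsection \<open>Encoding traces\<close>

text \<open>Only the pairs \<open>(m, dist(m, v))\<close> are remembered: x reaches v within r steps iff it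
  reaches one of these m within \<open>r - dist(m, v)\<close> steps.\<close>

definition nbhd_code ::
    "'a set \<Rightarrow> ('a \<times> 'a) set \<Rightarrow> nat \<Rightarrow> ('a \<times> 'a) set \<Rightarrow> 'a set \<Rightarrow> 'a \<Rightarrow> ('a \<times> nat) set" where
  "nbhd_code V E r L X v = (\<lambda>m. (m, LEAST b. reach_within V E b m v)) `
     {m \<in> WReach V E r L v. reach_within V E r m v \<and> (\<exists>x\<in>X. m \<in> WReach V E r L x)}"

definition nbhd_decode :: "'a set \<Rightarrow> ('a \<times> 'a) set \<Rightarrow> nat \<Rightarrow> 'a set \<Rightarrow> ('a \<times> nat) set \<Rightarrow> 'a set" where
  "nbhd_decode V E r X A = {x \<in> X. \<exists>(m, b)\<in>A. reach_within V E (r - b) x m}"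

lemma trace_in_nbhd_eq_decode:
  assumes EV: "E \<subseteq> V \<times> V" and lin: "linear_order_on V L" and "X \<subseteq> V"
  shows "X \<inter> in_nbhd V E r v = nbhd_decode V E r X (nbhd_code V E r L X v)"
proof (intro equalityI subsetI)
  let ?g = "\<lambda>m. LEAST b. reach_within V E b m v"
  fix x assume x: "x \<in> X \<inter> in_nbhd V E r v"
  then obtain m a b where m: "m \<in> WReach V E r L v" "m \<in> WReach V E r L x" "a + b \<le> r"
      "reach_within V E a x m" "reach_within V E b m v"
    using in_nbhd_through_WReach[OF EV lin] by blast
  have "?g m \<le> b" using m(5) by (rule Least_le)
  then have "reach_within V E (r - ?g m) x m" using m(3,4) by (auto elim: reach_within_mono)
  moreover have "reach_within V E r m v" using m(3,5) by (auto elim: reach_within_mono)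
  then have "(m, ?g m) \<in> nbhd_code V E r L X v"
    unfolding nbhd_code_def using m x by blast
  ultimately show "x \<in> nbhd_decode V E r X (nbhd_code V E r L X v)"
    unfolding nbhd_decode_def using x by blast
next
  let ?g = "\<lambda>m. LEAST b. reach_within V E b m v"
  fix x assume "x \<in> nbhd_decode V E r X (nbhd_code V E r L X v)"
  then obtain m where "x \<in> X" and "reach_within V E r m v" and xm: "reach_within V E (r - ?g m) x m"
    unfolding nbhd_decode_def nbhd_code_def by blast
  then have "reach_within V E (?g m) m v" and "?g m \<le> r" by (auto intro: LeastI Least_le)
  with xm have "reach_within V E r x v" using reach_within_trans by fastforce
  with \<open>x \<in> X\<close> \<open>X \<subseteq> V\<close> show "x \<in> X \<inter> in_nbhd V E r v"
    unfolding in_nbhd_def using reach_within_iff_dipath_le[OF EV] by blast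
qed

lemma nbhd_code_subset: "nbhd_code V E r L X v \<subseteq> (\<Union>x\<in>X. WReach V E r L x) \<times> {0..r}"
  unfolding nbhd_code_def by (auto intro: Least_le)

lemma card_nbhd_code_le:
  assumes "finite V"
  shows "card (nbhd_code V E r L X v) \<le> card (WReach V E r L v)"
proof -
  have fin: "finite (WReach V E r L v)" using assms unfolding WReach_def by simp
  then have "card (nbhd_code V E r L X v) \<le>
      card {m \<in> WReach V E r L v. reach_within V E r m v \<and> (\<exists>x\<in>X. m \<in> WReach V E r L x)}"
    unfolding nbhd_code_def by (intro card_image_le) auto
  also have "\<dots> \<le> card (WReach V E r L v)" using fin by (intro card_mono) auto
  finally show ?thesis .
qed

subsection \<open>Counting\<close>

text \<open>A set of at most c elements of K is the set of defined entries of a list of length c over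
  \<open>K \<union> {None}\<close>.\<close>

lemma card_small_subsets_le:
  assumes "finite K"
  shows "card {A. A \<subseteq> K \<and> card A \<le> c} \<le> (card K + 1) ^ c"
proof -
  define B where "B = insert None (Some ` K)"
  define Ls where "Ls = {xs. set xs \<subseteq> B \<and> length xs = c}"
  have "finite B" unfolding B_def using assms by simp
  then have "finite Ls" unfolding Ls_def by (simp add: finite_lists_length_eq)
  have "{A. A \<subseteq> K \<and> card A \<le> c} \<subseteq> (\<lambda>xs. {y. Some y \<in> set xs}) ` Ls"
  proof
    fix A assume A: "A \<in> {A. A \<subseteq> K \<and> card A \<le> c}"
    then have "finite A" using assms finite_subset by auto
    then obtain ys where ys: "set ys = A" "distinct ys" using finite_distinct_list by blast
    with A have "map Some ys @ replicate (c - card A) None \<in> Ls"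
      unfolding Ls_def B_def by (auto simp: distinct_card)
    then show "A \<in> (\<lambda>xs. {y. Some y \<in> set xs}) ` Ls"
      by (rule rev_image_eqI) (auto simp: ys(1))
  qed
  then have "card {A. A \<subseteq> K \<and> card A \<le> c} \<le> card ((\<lambda>xs. {y. Some y \<in> set xs}) ` Ls)"
    using \<open>finite Ls\<close> by (intro card_mono) auto
  also have "\<dots> \<le> card Ls" using \<open>finite Ls\<close> by (rule card_image_le)
  also have "\<dots> = card B ^ c" unfolding Ls_def using \<open>finite B\<close> by (rule card_lists_length_eq)
  also have "card B = card K + 1" unfolding B_def using assms by (simp add: card_image)
  finally show ?thesis .
qed

lemma power4_lt_two_power: "q \<ge> 12 \<Longrightarrow> (q + 1) ^ 4 < 144 * (2::nat) ^ q"
proof (induction q rule: dec_induct)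
  case (step q)
  define p where "p = q + 1"
  have "13 \<le> p" "1 \<le> p" using step(1) by (simp_all add: p_def)
  have "(p + 1) ^ 4 = p ^ 4 + 4 * p ^ 3 + 6 * p ^ 2 + 4 * p + 1"
    by (simp add: power_def algebra_simps numeral_eq_Suc)
  moreover have "13 * p ^ 3 \<le> p ^ 4" "11 * p ^ 2 \<le> p ^ 3" "p \<le> p ^ 2"
    using mult_le_mono1[OF \<open>13 \<le> p\<close>, of "p ^ 3"] mult_le_mono1[of 11 p "p ^ 2"]
      mult_le_mono1[OF \<open>1 \<le> p\<close>, of p] \<open>13 \<le> p\<close>
    by (simp_all add: eval_nat_numeral)
  ultimately have "(p + 1) ^ 4 \<le> 2 * p ^ 4" using \<open>13 \<le> p\<close> by linarith
  then show ?case using step by (simp add: p_def)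
qed simp

lemma square_lt_two_power:
  assumes "0 < c" and "12 * c \<le> q"
  shows "((q + 1) * c) ^ 2 < (2::nat) ^ q"
proof -
  have "144 * ((q + 1) * c) ^ 2 = ((q + 1) * (12 * c)) ^ 2"
    by (simp add: power2_eq_square algebra_simps)
  also have "\<dots> \<le> ((q + 1) * (q + 1)) ^ 2" using assms(2) by (intro power_mono mult_le_mono) auto
  also have "\<dots> = (q + 1) ^ 4" by (simp add: power2_eq_square[symmetric] power_mult[symmetric])
  also have "\<dots> < 144 * 2 ^ q" using assms by (intro power4_lt_two_power) linarith
  finally show ?thesis by simp
qed

text \<open>Writing \<open>q = \<lfloor>d / c\<rfloor>\<close>, a counterexample would give \<open>2\<^sup>d \<le> (d\<^sup>2)\<^sup>c \<le> (((q + 1) c)\<^sup>2)\<^sup>c < 2\<^sup>q\<^sup>c\<close>.\<close>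

lemma le_of_two_power_le:
  fixes c d r :: nat
  assumes "r \<ge> 1" and pow: "2 ^ d \<le> (c * d * (r + 1) + 1) ^ c"
  shows "d \<le> (r + 2) * (2 * c) ^ 2"
proof (rule ccontr)
  assume "\<not> ?thesis"
  then have big: "4 * c * c * (r + 2) < d" by (simp add: power2_eq_square algebra_simps)
  show False
  proof (cases "c = 0")
    case True
    with big pow show False by (simp add: le_Suc_eq)
  next
    case False
    have "c * (r + 1) \<le> 1 * (c * (r + 2))" by simp
    also have "\<dots> \<le> (4 * c) * (c * (r + 2))" using False by (intro mult_le_mono1) simp
    finally have "c * (r + 1) \<le> 4 * c * c * (r + 2)" by (simp only: mult.assoc)
    with big have "c * (r + 1) + 1 \<le> d" by linarith
    then have "d * (c * (r + 1) + 1) \<le> d * d" by (rule mult_le_mono2)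
    then have d2: "c * d * (r + 1) + 1 \<le> d * d" using big by (simp add: algebra_simps)
    define q where "q = d div c"
    have "q * c \<le> d" unfolding q_def by (rule div_times_less_eq_dividend)
    have "d < (q + 1) * c"
      using dividend_less_div_times[of c d] False by (simp add: q_def algebra_simps)
    have "12 * c * c \<le> 4 * c * c * (r + 2)" using \<open>r \<ge> 1\<close> by simp
    with big have "12 * c * c \<le> d" by linarith
    then have "12 * c * c div c \<le> q" unfolding q_def by (rule div_le_mono)
    then have "12 * c \<le> q" using False by simp
    have "(c * d * (r + 1) + 1) ^ c \<le> (d * d) ^ c" using d2 by (rule power_mono) simp
    also have "\<dots> \<le> (((q + 1) * c) ^ 2) ^ c"
      using \<open>d < (q + 1) * c\<close> by (intro power_mono) (auto simp: power2_eq_square intro: mult_mono)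
    also have "\<dots> < (2 ^ q) ^ c"
      using square_lt_two_power[OF _ \<open>12 * c \<le> q\<close>] False by (intro power_strict_mono) auto
    also have "\<dots> \<le> 2 ^ d" using \<open>q * c \<le> d\<close> by (simp add: power_mult[symmetric])
    finally show False using pow by simp
  qed
qed

lemma card_shattered_le:
  assumes fin: "finite V" and EV: "E \<subseteq> V \<times> V" and "r \<ge> 1"
    and lin: "linear_order_on V L" and c: "\<forall>v\<in>V. card (WReach V E r L v) \<le> c"
    and XV: "X \<subseteq> V" and sh: "shattered_by X (in_nbhd V E r ` V)"
  shows "card X \<le> (r + 2) * (2 * c) ^ 2"
proof -
  define S where "S = (\<Union>x\<in>X. WReach V E r L x)"
  define K where "K = S \<times> {0..r}"
  have "finite X" using XV fin finite_subset by auto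
  have "S \<subseteq> V" unfolding S_def WReach_def by auto
  then have "finite S" using fin finite_subset by auto
  then have fK: "finite K" unfolding K_def by simp
  have "card S \<le> (\<Sum>x\<in>X. card (WReach V E r L x))"
    unfolding S_def using \<open>finite X\<close> by (rule card_UN_le)
  also have "\<dots> \<le> (\<Sum>x\<in>X. c)" using c XV by (intro sum_mono) auto
  finally have "card S \<le> c * card X" by (simp add: mult.commute)
  have "card K = card S * (r + 1)" unfolding K_def by (simp add: card_cartesian_product)
  also have "\<dots> \<le> c * card X * (r + 1)" using \<open>card S \<le> c * card X\<close> by (rule mult_le_mono1)
  finally have cK: "card K \<le> c * card X * (r + 1)" .
  have codes: "nbhd_code V E r L X ` V \<subseteq> {A. A \<subseteq> K \<and> card A \<le> c}"
  proof (intro image_subsetI CollectI conjI)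
    fix v assume "v \<in> V"
    show "nbhd_code V E r L X v \<subseteq> K" unfolding K_def S_def by (rule nbhd_code_subset)
    show "card (nbhd_code V E r L X v) \<le> c"
      using card_nbhd_code_le[OF fin] c \<open>v \<in> V\<close> by (blast intro: le_trans)
  qed
  have "Pow X = (\<lambda>v. X \<inter> in_nbhd V E r v) ` V"
    using sh unfolding shattered_by_def by (simp add: image_image)
  also have "\<dots> = nbhd_decode V E r X ` nbhd_code V E r L X ` V"
    using trace_in_nbhd_eq_decode[OF EV lin XV] by (simp add: image_image)
  finally have "2 ^ card X = card (nbhd_decode V E r X ` nbhd_code V E r L X ` V)"
    using \<open>finite X\<close> by (metis card_Pow)
  also have "\<dots> \<le> card (nbhd_code V E r L X ` V)" using fin by (intro card_image_le) simp
  also have "\<dots> \<le> card {A. A \<subseteq> K \<and> card A \<le> c}" using codes fK by (intro card_mono) auto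
  also have "\<dots> \<le> (card K + 1) ^ c" using fK by (rule card_small_subsets_le)
  also have "\<dots> \<le> (c * card X * (r + 1) + 1) ^ c" using cK by (intro power_mono) auto
  finally show ?thesis by (rule le_of_two_power_le[OF \<open>r \<ge> 1\<close>])
qed

theorem mainTheorem15:
  fixes V :: "'a set" and E :: "('a \<times> 'a) set" and r :: nat
  assumes "finite V" and "E \<subseteq> V \<times> V" and "r \<ge> 1"
  shows "dist_vc_dim V E r \<le> (r + 2) * (2 * wcol V E r) ^ 2"
proof -
  obtain L where "linear_order_on V L" and "\<forall>v\<in>V. card (WReach V E r L v) \<le> wcol V E r"
    using exists_linear_order_wcol[OF assms(1)] by blast
  then have "\<forall>X. X \<subseteq> V \<and> shattered_by X (in_nbhd V E r ` V) \<longrightarrow>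
      card X \<le> (r + 2) * (2 * wcol V E r) ^ 2"
    using card_shattered_le[OF assms] by blast
  moreover have "finite {card X | X. X \<subseteq> V \<and> shattered_by X (in_nbhd V E r ` V)}"
    using assms(1) by (auto intro: finite_subset[of _ "card ` Pow V"])
  ultimately show ?thesis
    unfolding dist_vc_dim_def vc_dim_def by (intro Max.boundedI) auto
qed

end
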